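(* Let $\gamma>0$ and let $H$ be a $3$-graph of order $n$ with $\delta_2(H)\ge(1/2-\gamma)n$. Suppose $X,Y$ is a bipartition of $V(H)$. Let $x,x'\in X$ and $y_1,y_2\in Y$ be such that $xy_1y_2,\,xx'y_1,\,xx'y_2\in E(H)$. Then at least one of the following holds: (a) $\{x,x',y_1,y_2\}$ is contained in at least $\gamma n/4$ $5$-sets that span $(X,Y)$-bridges of length $1$; (b) there are at least $\gamma n/4$ copies $K$ of $K_4^3$ in $H$ with $|V(K)\cap X|=2=|V(K)\cap Y|$ and $|V(K)\cap\{x,x',y_1,y_2\}|=3$; (c) $(1/2-15\gamma/4)n\le|X|,|Y|\le(1/2+15\gamma/4)n$ and $xx'y_1$ is $(26\gamma,X,Y)$-typical.
   Context: $\delta_2(H)$ is the minimum over pairs of distinct vertices of the number of edges containing the pair. $K_4^3$ is the complete $3$-graph on $4$ vertices (copies counted as $4$-sets all of whose triples are edges); $K_4^-$ is the $3$-graph with $4$ vertices and $3$ edges. A set $S$ is an $(x,y)$-connector of length $1$ if $S\cap\{x,y\}=\emptyset$, $|S|=3$, and both $S\cup\{x\}$ and $S\cup\{y\}$ span copies of $K_4^-$ in $H$. A triple $(x_0,y_0,S)$ is an $(X,Y)$-bridge of length $1$ if $x_0\in X$, $y_0\in Y$ and $S$ is an $(x_0,y_0)$-connector of length $1$; a $5$-set $Z$ spans an $(X,Y)$-bridge of length $1$ if $Z=S\cup\{x_0,y_0\}$ for some such bridge. Write $N(uv)$ for the set of $w$ with $uvw\in E(H)$, $N(uv,Z)=N(uv)\cap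 Z$, $\deg(uv,Z)=|N(uv,Z)|$. For $\rho>0$, a triple $xx'y$ with $x,x'\in X$, $y\in Y$ is $(\rho,X,Y)$-typical if (T1) $\deg(xx',Y)\ge|Y|-\rho n$, (T2) $|N(xy,X)\cap N(x'y,X)|\le\rho n$, and (T3) $|X|-\rho n\le\deg(xy,X)+\deg(x'y,X)$. *)

theory Defs
  imports Complex_Main
begin

definition three_graph :: "'a set \<Rightarrow> 'a set set \<Rightarrow> bool" where
  "three_graph V E \<longleftrightarrow> finite V \<and> (\<forall>e\<in>E. e \<subseteq> V \<and> card e = 3)"

definition nbh :: "'a set \<Rightarrow> 'a set set \<Rightarrow> 'a \<Rightarrow> 'a \<Rightarrow> 'a set" where
  "nbh V E u v = {w \<in> V. {u, v, w} \<in> E}"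

definition min_codeg :: "'a set \<Rightarrow> 'a set set \<Rightarrow> nat" where
  "min_codeg V E = Min {card (nbh V E u v) | u v. u \<in> V \<and> v \<in> V \<and> u \<noteq> v}"

definition spans_K4minus :: "'a set set \<Rightarrow> 'a set \<Rightarrow> bool" where
  "spans_K4minus E T \<longleftrightarrow> card T = 4 \<and> card {e. e \<subseteq> T \<and> card e = 3 \<and> e \<in> E} \<ge> 3"

definition is_K4 :: "'a set set \<Rightarrow> 'a set \<Rightarrow> bool" where
  "is_K4 E T \<longleftrightarrow> card T = 4 \<and> (\<forall>e. e \<subseteq> T \<and> card e = 3 \<longrightarrow> e \<in> E)"

definition connector1 :: "'a set \<Rightarrow> 'a set set \<Rightarrow> 'a \<Rightarrow> 'a \<Rightarrow> 'a set \<Rightarrow> bool" where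
  "connector1 V E x y S \<longleftrightarrow> S \<subseteq> V \<and> S \<inter> {x, y} = {} \<and> card S = 3
     \<and> spans_K4minus E (S \<union> {x}) \<and> spans_K4minus E (S \<union> {y})"

definition bridge1 :: "'a set \<Rightarrow> 'a set set \<Rightarrow> 'a set \<Rightarrow> 'a set \<Rightarrow> 'a \<Rightarrow> 'a \<Rightarrow> 'a set \<Rightarrow> bool" where
  "bridge1 V E X Y x0 y0 S \<longleftrightarrow> x0 \<in> X \<and> y0 \<in> Y \<and> connector1 V E x0 y0 S"

definition spans_bridge1 :: "'a set \<Rightarrow> 'a set set \<Rightarrow> 'a set \<Rightarrow> 'a set \<Rightarrow> 'a set \<Rightarrow> bool" where
  "spans_bridge1 V E X Y Z \<longleftrightarrow> card Z = 5 \<and>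
     (\<exists>x0 y0 S. bridge1 V E X Y x0 y0 S \<and> Z = S \<union> {x0, y0})"

definition typical :: "'a set \<Rightarrow> 'a set set \<Rightarrow> real \<Rightarrow> 'a set \<Rightarrow> 'a set \<Rightarrow> 'a \<Rightarrow> 'a \<Rightarrow> 'a \<Rightarrow> bool" where
  "typical V E \<rho> X Y x x' y \<longleftrightarrow> x \<in> X \<and> x' \<in> X \<and> y \<in> Y \<and>
     real (card (nbh V E x x' \<inter> Y)) \<ge> real (card Y) - \<rho> * real (card V) \<and>
     real (card (nbh V E x y \<inter> nbh V E x' y \<inter> X)) \<le> \<rho> * real (card V) \<and>
     real (card X) - \<rho> * real (card V) \<le> real (card (nbh V E x y \<inter> X)) + real (card (nbh V E x' y \<inter> X))"

end

theory Submission
  imports Defs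
begin

text \<open>
  Let T = {x, x', y1, y2}; its three given edges make T a K_4^-. Swap a vertex t of T for
  a vertex v outside T. If T - t + v spans a K_4^- and v, t lie on opposite sides, then
  t, v and T - t form an (X,Y)-bridge spanning T + v; if T - t + v spans a K_4^3 and v, t
  lie on the same side, that K_4^3 is one of those counted in (b). Distinct vertices v give
  distinct 5-sets T + v and distinct such K_4^3's, so if (a) and (b) fail, fewer than
  \<gamma>n/4 vertices v do either. Every other vertex lies in few of the links N(uw) of the six
  pairs uw of T, in a pattern that depends on its side. Summing these pointwise bounds over
  all v and comparing with the codegree bound |N(uw)| \<ge> (1/2 - \<gamma>)n gives |X| \<approx> |Y|
  and the three typicality conditions.
\<close>

lemma nbh_subset: "nbh V E u w \<subseteq> V"
  unfolding nbh_def by auto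

lemma mem_nbh_iff: "v \<in> V \<Longrightarrow> v \<in> nbh V E u w \<longleftrightarrow> {u, w, v} \<in> E"
  unfolding nbh_def by auto

lemma not_mem_nbh:
  assumes "three_graph V E"
  shows "u \<notin> nbh V E u w" "w \<notin> nbh V E u w"
proof -
  have "card {u, w} \<noteq> 3" by (simp add: card_insert_if)
  then have "{u, w} \<notin> E" using assms unfolding three_graph_def by blast
  then show "u \<notin> nbh V E u w" "w \<notin> nbh V E u w"
    unfolding nbh_def by (auto simp: insert_commute)
qed

lemma min_codeg_le_card_nbh:
  assumes "three_graph V E" "u \<in> V" "w \<in> V" "u \<noteq> w"
  shows "min_codeg V E \<le> card (nbh V E u w)"
proof -
  have "finite V" using assms(1) unfolding three_graph_def by simp
  then have "{card (nbh V E u v) | u v. u \<in> V \<and> v \<in> V \<and> u \<noteq> v} \<subseteq> {..card V}"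
    using card_mono[OF _ nbh_subset] by auto
  then show ?thesis
    unfolding min_codeg_def using assms(2-4) finite_subset by (intro Min_le) blast+
qed

lemma spans_K4minusI:
  assumes "distinct [a, b, c, d]" "{a, b, c} \<in> E" "{a, b, d} \<in> E" "{a, c, d} \<in> E"
  shows "spans_K4minus E {a, b, c, d}"
proof -
  let ?F = "{e. e \<subseteq> {a, b, c, d} \<and> card e = 3 \<and> e \<in> E}"
  have "d \<in> {a, b, d}" "d \<in> {a, c, d}" "d \<notin> {a, b, c}" "c \<in> {a, c, d}" "c \<notin> {a, b, d}"
    using assms(1) by auto
  then have "{a, b, c} \<noteq> {a, b, d}" "{a, b, c} \<noteq> {a, c, d}" "{a, b, d} \<noteq> {a, c, d}"
    by blast+
  then have three: "card {{a, b, c}, {a, b, d}, {a, c, d}} = 3" by simp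
  have sub: "{{a, b, c}, {a, b, d}, {a, c, d}} \<subseteq> ?F"
    using assms by simp
  have fin: "finite ?F"
    by (rule finite_subset[of _ "Pow {a, b, c, d}"]) auto
  have "3 \<le> card ?F"
    using card_mono[OF fin sub] three by linarith
  then show ?thesis
    using assms(1) unfolding spans_K4minus_def by simp
qed

lemma spans_K4minus_insert:
  assumes "distinct [v, a, b, c]" "{a, b, c} \<in> E"
    and "{v, a, b} \<in> E \<and> {v, a, c} \<in> E \<or> {v, a, b} \<in> E \<and> {v, b, c} \<in> E
      \<or> {v, a, c} \<in> E \<and> {v, b, c} \<in> E"
  shows "spans_K4minus E {v, a, b, c}"
  using assms(3)
proof (elim disjE conjE)
  assume "{v, a, b} \<in> E" "{v, a, c} \<in> E"
  then show ?thesis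
    using spans_K4minusI[of a v b c E] assms(1,2) by (auto simp: insert_commute)
next
  assume "{v, a, b} \<in> E" "{v, b, c} \<in> E"
  then show ?thesis
    using spans_K4minusI[of b v a c E] assms(1,2) by (auto simp: insert_commute)
next
  assume "{v, a, c} \<in> E" "{v, b, c} \<in> E"
  then show ?thesis
    using spans_K4minusI[of c v a b E] assms(1,2) by (auto simp: insert_commute)
qed

lemma card3_subset_of_four:
  assumes "distinct [a, b, c, d]" "e \<subseteq> {a, b, c, d}" "card e = 3"
  shows "e = {a, b, c} \<or> e = {a, b, d} \<or> e = {a, c, d} \<or> e = {b, c, d}"
proof -
  have "card ({a, b, c, d} - e) = 1"
    using assms by (simp add: card_Diff_subset finite_subset)
  then obtain z where "{a, b, c, d} - e = {z}" by (rule card_1_singletonE)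
  then have "e = {a, b, c, d} - {z}" "z \<in> {a, b, c, d}" using assms(2) by auto
  then show ?thesis using assms(1) by auto
qed

lemma is_K4I:
  assumes "distinct [a, b, c, d]"
    and "{a, b, c} \<in> E" "{a, b, d} \<in> E" "{a, c, d} \<in> E" "{b, c, d} \<in> E"
  shows "is_K4 E {a, b, c, d}"
  using assms card3_subset_of_four[OF assms(1)] unfolding is_K4_def by auto

lemma card_exchange_Int:
  assumes "finite A" "a \<in> A" "b \<notin> A" "a \<in> S \<longleftrightarrow> b \<in> S"
  shows "card (insert b (A - {a}) \<inter> S) = card (A \<inter> S)"
proof (cases "b \<in> S")
  case True
  then have "insert b (A - {a}) \<inter> S = insert b (A \<inter> S - {a})" by auto
  also have "card \<dots> = Suc (card (A \<inter> S - {a}))"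
    using assms(1,3) by (intro card_insert_disjoint) auto
  also have "\<dots> = card (A \<inter> S)"
    using True assms by (intro card_Suc_Diff1) auto
  finally show ?thesis .
next
  case False
  then have "insert b (A - {a}) \<inter> S = A \<inter> S" using assms(4) by auto
  then show ?thesis by simp
qed

lemma spans_bridge1_exchange:
  assumes "spans_K4minus E T" "T \<subseteq> V" "t \<in> T" "v \<in> V" "v \<notin> T"
    and "spans_K4minus E (insert v (T - {t}))"
    and "t \<in> X \<and> v \<in> Y \<or> t \<in> Y \<and> v \<in> X"
  shows "spans_bridge1 V E X Y (insert v T)"
proof -
  define S where "S = T - {t}"
  have "card T = 4" using assms(1) unfolding spans_K4minus_def by simp
  then have "finite T" by (simp add: card_ge_0_finite)
  then have S: "S \<subseteq> V" "card S = 3" "S \<inter> {t, v} = {}" "S \<union> {t} = T" "S \<union> {v} = insert v (T - {t})"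
    using \<open>card T = 4\<close> assms(2,3,5) unfolding S_def by auto
  have Z: "card (insert v T) = 5" "insert v T = S \<union> {t, v}" "insert v T = S \<union> {v, t}"
    using \<open>finite T\<close> \<open>card T = 4\<close> assms(3,5) unfolding S_def by auto
  from assms(7) show ?thesis
  proof (elim disjE conjE)
    assume "t \<in> X" "v \<in> Y"
    then have "bridge1 V E X Y t v S"
      unfolding bridge1_def connector1_def using S assms(1,6) by (auto simp: insert_commute)
    then show ?thesis unfolding spans_bridge1_def using Z by blast
  next
    assume "t \<in> Y" "v \<in> X"
    then have "bridge1 V E X Y v t S"
      unfolding bridge1_def connector1_def using S assms(1,6) by (auto simp: insert_commute)
    then show ?thesis unfolding spans_bridge1_def using Z by blast
  qed
qed

text \<open>The pointwise bound behind link_count_T3 for a vertex of Y.\<close>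

lemma six_indicator_bound:
  fixes A B C D F G \<beta> \<kappa> :: bool
  assumes "B \<and> C \<or> B \<and> G \<or> C \<and> G \<Longrightarrow> \<beta>" "D \<Longrightarrow> F \<Longrightarrow> G \<Longrightarrow> \<beta>"
    and "A \<Longrightarrow> C \<Longrightarrow> F \<Longrightarrow> \<kappa>" "A \<Longrightarrow> B \<Longrightarrow> D \<Longrightarrow> \<kappa>"
  shows "of_bool A + of_bool B + of_bool C + of_bool D + of_bool F + of_bool G
    \<le> 3 + 2 * of_bool \<beta> + (of_bool \<kappa> :: nat)"
  using assms by (cases \<beta>; cases \<kappa>; cases A; cases B; cases C; cases D; cases F; cases G; simp)

locale bridge_quadruple =
  fixes V :: "'a set" and E :: "'a set set" and X Y :: "'a set" and \<gamma> :: real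
    and x x' y1 y2 :: 'a
  assumes three_graph: "three_graph V E"
    and min_codeg: "real (min_codeg V E) \<ge> (1/2 - \<gamma>) * real (card V)"
    and cover: "X \<union> Y = V" and disjoint: "X \<inter> Y = {}"
    and mem: "x \<in> X" "x' \<in> X" "y1 \<in> Y" "y2 \<in> Y"
    and edges: "{x, y1, y2} \<in> E" "{x, x', y1} \<in> E" "{x, x', y2} \<in> E"
begin

abbreviation N :: "'a \<Rightarrow> 'a \<Rightarrow> 'a set" where
  "N \<equiv> nbh V E"

definition T :: "'a set" where
  "T = {x, x', y1, y2}"

definition R :: "'a set" where
  "R = V - T"

definition crossing_K4s :: "'a set set" where
  "crossing_K4s = {K. K \<subseteq> V \<and> is_K4 E K \<and> card (K \<inter> X) = 2 \<and> card (K \<inter> Y) = 2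
     \<and> card (K \<inter> T) = 3}"

definition bridge_vertex :: "'a \<Rightarrow> bool" where
  "bridge_vertex v \<longleftrightarrow> spans_bridge1 V E X Y (insert v T)"

definition clique_vertex :: "'a \<Rightarrow> bool" where
  "clique_vertex v \<longleftrightarrow> (\<exists>K \<in> crossing_K4s. v \<in> K)"

lemma finite_V: "finite V"
  using three_graph unfolding three_graph_def by simp

lemma side_iff: "v \<in> V \<Longrightarrow> v \<in> Y \<longleftrightarrow> v \<notin> X"
  using cover disjoint by blast

lemma distinct_quadruple: "distinct [x, x', y1, y2]"
proof -
  have "card {x, x', y1} = 3" "card {x, y1, y2} = 3"
    using three_graph edges unfolding three_graph_def by auto
  then have "x \<noteq> x'" "y1 \<noteq> y2" by (auto simp: card_insert_if split: if_splits)
  then show ?thesis using mem disjoint by auto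
qed

lemma T_subset: "T \<subseteq> V"
  using mem cover unfolding T_def by auto

lemma finite_T: "finite T"
  using finite_subset[OF T_subset finite_V] .

lemma card_T: "card T = 4"
  using distinct_quadruple unfolding T_def by simp

lemma T_spans_K4minus: "spans_K4minus E T"
  using spans_K4minusI[of x x' y1 y2 E] distinct_quadruple edges
  unfolding T_def by (simp add: insert_commute)

lemma T_remove:
  "T - {x} = {x', y1, y2}" "T - {x'} = {x, y1, y2}" "T - {y1} = {x, x', y2}" "T - {y2} = {x, x', y1}"
  using distinct_quadruple unfolding T_def by auto

lemma mem_R: "v \<in> R \<Longrightarrow> v \<in> V \<and> distinct [v, x, x', y1, y2]"
  using distinct_quadruple unfolding R_def T_def by auto

lemma finite_R: "finite R"
  using finite_V unfolding R_def by simp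

lemma card_V: "card V = card R + 4"
  using card_Diff_subset[OF finite_T T_subset] card_mono[OF finite_V T_subset] card_T
  unfolding R_def by simp

lemma card_R: "card R = card (R \<inter> X) + card (R \<inter> Y)"
proof -
  have "R = (R \<inter> X) \<union> (R \<inter> Y)" using cover unfolding R_def by auto
  then show ?thesis using card_Un_disjoint[of "R \<inter> X" "R \<inter> Y"] finite_R disjoint by auto
qed

lemma card_X: "card X = card (R \<inter> X) + 2" and card_Y: "card Y = card (R \<inter> Y) + 2"
proof -
  have "X \<inter> T = {x, x'}" "Y \<inter> T = {y1, y2}" "R \<inter> X = X - T" "R \<inter> Y = Y - T"
    using mem disjoint cover unfolding T_def R_def by auto
  moreover have "finite X" "finite Y" using finite_V cover by auto
  ultimately show "card X = card (R \<inter> X) + 2" "card Y = card (R \<inter> Y) + 2"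
    using card_Int_Diff[of X T] card_Int_Diff[of Y T] distinct_quadruple by auto
qed

lemma card_R_nbh:
  assumes "u \<in> T" "w \<in> T" "u \<noteq> w"
  shows "(1/2 - \<gamma>) * real (card V) - 2 \<le> real (card (R \<inter> N u w))"
proof -
  have "u \<in> V" "w \<in> V" using assms(1,2) T_subset by auto
  have "N u w \<subseteq> (R \<inter> N u w) \<union> (T - {u, w})"
  proof
    fix z assume "z \<in> N u w"
    moreover have "z \<noteq> u" "z \<noteq> w"
      using \<open>z \<in> N u w\<close> by (auto simp: not_mem_nbh[OF three_graph])
    moreover have "z \<in> V" using \<open>z \<in> N u w\<close> unfolding nbh_def by simp
    ultimately show "z \<in> (R \<inter> N u w) \<union> (T - {u, w})" unfolding R_def by auto
  qed
  then have "card (N u w) \<le> card ((R \<inter> N u w) \<union> (T - {u, w}))"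
    using finite_R finite_T by (intro card_mono) auto
  also have "\<dots> \<le> card (R \<inter> N u w) + card (T - {u, w})"
    by (rule card_Un_le)
  also have "card (T - {u, w}) = 2"
    using assms card_T by (simp add: card_Diff_subset)
  finally have "card (N u w) \<le> card (R \<inter> N u w) + 2" .
  moreover have "min_codeg V E \<le> card (N u w)"
    using min_codeg_le_card_nbh[OF three_graph \<open>u \<in> V\<close> \<open>w \<in> V\<close> assms(3)] .
  ultimately show ?thesis using min_codeg by linarith
qed

lemma card_T_Int_X: "card (T \<inter> X) = 2" and card_T_Int_Y: "card (T \<inter> Y) = 2"
proof -
  have "T \<inter> X = {x, x'}" "T \<inter> Y = {y1, y2}"
    using mem disjoint unfolding T_def by auto
  then show "card (T \<inter> X) = 2" "card (T \<inter> Y) = 2"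
    using distinct_quadruple by auto
qed

lemma bridge_vertexI:
  assumes "v \<in> R" "t \<in> T" "t \<in> X \<and> v \<in> Y \<or> t \<in> Y \<and> v \<in> X"
    and "spans_K4minus E (insert v (T - {t}))"
  shows "bridge_vertex v"
  using spans_bridge1_exchange[OF T_spans_K4minus T_subset assms(2) _ _ assms(4,3)] assms(1)
  unfolding bridge_vertex_def R_def by blast

lemma clique_vertexI:
  assumes "v \<in> R" "t \<in> T" "t \<in> X \<longleftrightarrow> v \<in> X" and K4: "is_K4 E (insert v (T - {t}))"
  shows "clique_vertex v"
proof -
  let ?K = "insert v (T - {t})"
  have "v \<in> V" "v \<notin> T" using assms(1) unfolding R_def by auto
  have "t \<in> Y \<longleftrightarrow> v \<in> Y"
    using assms(2,3) T_subset side_iff \<open>v \<in> V\<close> by blast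
  then have "card (?K \<inter> X) = 2" "card (?K \<inter> Y) = 2"
    using card_exchange_Int[OF finite_T assms(2) \<open>v \<notin> T\<close>] assms(3) card_T_Int_X card_T_Int_Y
    by auto
  moreover have "card (?K \<inter> T) = 3"
  proof -
    have "?K \<inter> T = T - {t}" using \<open>v \<notin> T\<close> by auto
    then show ?thesis using card_T assms(2) by (simp add: card_Diff_subset)
  qed
  moreover have "?K \<subseteq> V" using \<open>v \<in> V\<close> T_subset by auto
  ultimately have "?K \<in> crossing_K4s" using K4 unfolding crossing_K4s_def by blast
  then show ?thesis unfolding clique_vertex_def by blast
qed

lemma card_bridge_vertices_le:
  "card (R \<inter> {v. bridge_vertex v}) \<le> card {Z. Z \<subseteq> V \<and> T \<subseteq> Z \<and> spans_bridge1 V E X Y Z}"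
proof (rule card_inj_on_le)
  show "inj_on (\<lambda>v. insert v T) (R \<inter> {v. bridge_vertex v})"
    by (rule inj_onI) (auto simp: R_def)
  show "(\<lambda>v. insert v T) ` (R \<inter> {v. bridge_vertex v}) \<subseteq> {Z. Z \<subseteq> V \<and> T \<subseteq> Z \<and> spans_bridge1 V E X Y Z}"
    using T_subset unfolding R_def bridge_vertex_def by auto
  show "finite {Z. Z \<subseteq> V \<and> T \<subseteq> Z \<and> spans_bridge1 V E X Y Z}"
    using finite_V by (auto intro: finite_subset[of _ "Pow V"])
qed

lemma card_clique_vertices_le: "card (R \<inter> {v. clique_vertex v}) \<le> card crossing_K4s"
proof -
  have fin: "finite crossing_K4s"
    using finite_V by (auto intro: finite_subset[of _ "Pow V"] simp: crossing_K4s_def)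
  have "R \<inter> {v. clique_vertex v} \<subseteq> (\<Union>K \<in> crossing_K4s. K - T)"
    unfolding clique_vertex_def R_def by auto
  then have "card (R \<inter> {v. clique_vertex v}) \<le> card (\<Union>K \<in> crossing_K4s. K - T)"
    by (intro card_mono finite_subset[OF _ finite_V]) (auto simp: crossing_K4s_def)
  also have "\<dots> \<le> (\<Sum>K \<in> crossing_K4s. card (K - T))"
    using fin by (rule card_UN_le)
  also have "\<dots> = (\<Sum>K \<in> crossing_K4s. 1)"
  proof (rule sum.cong)
    fix K assume "K \<in> crossing_K4s"
    then have "card K = 4" "card (K \<inter> T) = 3"
      unfolding crossing_K4s_def is_K4_def by auto
    then show "card (K - T) = 1"
      using card_Diff_subset_Int[of K T] by (simp add: card_ge_0_finite)
  qed simp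
  finally show ?thesis by simp
qed

lemma bridge_vertex_replacing_y1:
  assumes "v \<in> R" "v \<in> X"
    and "v \<in> N x x' \<and> v \<in> N x y2 \<or> v \<in> N x x' \<and> v \<in> N x' y2 \<or> v \<in> N x y2 \<and> v \<in> N x' y2"
  shows "bridge_vertex v"
proof (rule bridge_vertexI[OF assms(1)])
  show "y1 \<in> T" "y1 \<in> X \<and> v \<in> Y \<or> y1 \<in> Y \<and> v \<in> X"
    using assms(2) mem(3) by (auto simp: T_def)
  show "spans_K4minus E (insert v (T - {y1}))"
    using spans_K4minus_insert[of v x x' y2 E] assms mem_R[OF assms(1)] edges
    by (auto simp: T_remove mem_nbh_iff insert_commute)
qed

lemma bridge_vertex_replacing_y2:
  assumes "v \<in> R" "v \<in> X"
    and "v \<in> N x x' \<and> v \<in> N x y1 \<or> v \<in> N x x' \<and> v \<in> N x' y1 \<or> v \<in> N x y1 \<and> v \<in> N x' y1"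
  shows "bridge_vertex v"
proof (rule bridge_vertexI[OF assms(1)])
  show "y2 \<in> T" "y2 \<in> X \<and> v \<in> Y \<or> y2 \<in> Y \<and> v \<in> X"
    using assms(2) mem(4) by (auto simp: T_def)
  show "spans_K4minus E (insert v (T - {y2}))"
    using spans_K4minus_insert[of v x x' y1 E] assms mem_R[OF assms(1)] edges
    by (auto simp: T_remove mem_nbh_iff insert_commute)
qed

lemma bridge_vertex_replacing_x':
  assumes "v \<in> R" "v \<in> Y"
    and "v \<in> N x y1 \<and> v \<in> N x y2 \<or> v \<in> N x y1 \<and> v \<in> N y1 y2 \<or> v \<in> N x y2 \<and> v \<in> N y1 y2"
  shows "bridge_vertex v"
proof (rule bridge_vertexI[OF assms(1)])
  show "x' \<in> T" "x' \<in> X \<and> v \<in> Y \<or> x' \<in> Y \<and> v \<in> X"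
    using assms(2) mem(2) by (auto simp: T_def)
  show "spans_K4minus E (insert v (T - {x'}))"
    using spans_K4minus_insert[of v x y1 y2 E] assms mem_R[OF assms(1)] edges
    by (auto simp: T_remove mem_nbh_iff insert_commute)
qed

lemma bridge_vertex_replacing_x:
  assumes "v \<in> R" "v \<in> Y" "v \<in> N x' y1" "v \<in> N x' y2" "v \<in> N y1 y2"
  shows "bridge_vertex v"
proof (rule bridge_vertexI[OF assms(1)])
  show "x \<in> T" "x \<in> X \<and> v \<in> Y \<or> x \<in> Y \<and> v \<in> X"
    using assms(2) mem(1) by (auto simp: T_def)
  show "spans_K4minus E (insert v (T - {x}))"
    using spans_K4minusI[of v x' y1 y2 E] assms mem_R[OF assms(1)]
    by (auto simp: T_remove mem_nbh_iff insert_commute)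
qed

lemma clique_vertex_replacing_y1:
  assumes "v \<in> R" "v \<in> Y" "v \<in> N x x'" "v \<in> N x y2" "v \<in> N x' y2"
  shows "clique_vertex v"
proof (rule clique_vertexI[OF assms(1)])
  show "y1 \<in> T" "y1 \<in> X \<longleftrightarrow> v \<in> X"
    using assms(2) mem(3) disjoint by (auto simp: T_def)
  show "is_K4 E (insert v (T - {y1}))"
    using is_K4I[of v x x' y2 E] assms mem_R[OF assms(1)] edges
    by (auto simp: T_remove mem_nbh_iff insert_commute)
qed

lemma clique_vertex_replacing_y2:
  assumes "v \<in> R" "v \<in> Y" "v \<in> N x x'" "v \<in> N x y1" "v \<in> N x' y1"
  shows "clique_vertex v"
proof (rule clique_vertexI[OF assms(1)])
  show "y2 \<in> T" "y2 \<in> X \<longleftrightarrow> v \<in> X"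
    using assms(2) mem(4) disjoint by (auto simp: T_def)
  show "is_K4 E (insert v (T - {y2}))"
    using is_K4I[of v x x' y1 E] assms mem_R[OF assms(1)] edges
    by (auto simp: T_remove mem_nbh_iff insert_commute)
qed

lemma clique_vertex_replacing_x':
  assumes "v \<in> R" "v \<in> X" "v \<in> N x y1" "v \<in> N x y2" "v \<in> N y1 y2"
  shows "clique_vertex v"
proof (rule clique_vertexI[OF assms(1)])
  show "x' \<in> T" "x' \<in> X \<longleftrightarrow> v \<in> X"
    using assms(2) mem(2) by (auto simp: T_def)
  show "is_K4 E (insert v (T - {x'}))"
    using is_K4I[of v x y1 y2 E] assms mem_R[OF assms(1)] edges
    by (auto simp: T_remove mem_nbh_iff insert_commute)
qed

lemma link_count_X_excess:
  "2 * card (R \<inter> N x x') + 2 * card (R \<inter> N x y2) + 2 * card (R \<inter> N x' y2) + card (R \<inter> X)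
   \<le> 3 * card R + 4 * card (R \<inter> {v. bridge_vertex v}) + 2 * card (R \<inter> {v. clique_vertex v})
     + card (R \<inter> Y)"
proof -
  let ?F = "\<lambda>v. 2 * of_bool (v \<in> N x x') + 2 * of_bool (v \<in> N x y2) + 2 * of_bool (v \<in> N x' y2)
    + of_bool (v \<in> X) :: nat"
  let ?G = "\<lambda>v. 3 + 4 * of_bool (bridge_vertex v) + 2 * of_bool (clique_vertex v)
    + of_bool (v \<in> Y) :: nat"
  have pointwise: "?F v \<le> ?G v" if v: "v \<in> R" for v
  proof (cases "v \<in> X")
    case True
    with bridge_vertex_replacing_y1[OF v True] show ?thesis
      by (cases "v \<in> N x x'"; cases "v \<in> N x y2"; cases "v \<in> N x' y2"; cases "bridge_vertex v"; simp)
  next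
    case False
    then have "v \<in> Y" using side_iff mem_R[OF v] by blast
    with False clique_vertex_replacing_y1[OF v this] show ?thesis
      by (cases "v \<in> N x x'"; cases "v \<in> N x y2"; cases "v \<in> N x' y2"; cases "clique_vertex v"; simp)
  qed
  have "sum ?F R \<le> sum ?G R" by (rule sum_mono) (rule pointwise)
  then show ?thesis
    using finite_R by (simp add: sum.distrib flip: sum_distrib_left)
qed

lemma link_count_Y_excess:
  "2 * card (R \<inter> N x y1) + 2 * card (R \<inter> N x y2) + 2 * card (R \<inter> N y1 y2) + card (R \<inter> Y)
   \<le> 3 * card R + 4 * card (R \<inter> {v. bridge_vertex v}) + 2 * card (R \<inter> {v. clique_vertex v})
     + card (R \<inter> X)"
proof -
  let ?F = "\<lambda>v. 2 * of_bool (v \<in> N x y1) + 2 * of_bool (v \<in> N x y2) + 2 * of_bool (v \<in> N y1 y2)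
    + of_bool (v \<in> Y) :: nat"
  let ?G = "\<lambda>v. 3 + 4 * of_bool (bridge_vertex v) + 2 * of_bool (clique_vertex v)
    + of_bool (v \<in> X) :: nat"
  have pointwise: "?F v \<le> ?G v" if v: "v \<in> R" for v
  proof (cases "v \<in> X")
    case True
    then have "v \<notin> Y" using disjoint by blast
    with True clique_vertex_replacing_x'[OF v True] show ?thesis
      by (cases "v \<in> N x y1"; cases "v \<in> N x y2"; cases "v \<in> N y1 y2"; cases "clique_vertex v"; simp)
  next
    case False
    then have "v \<in> Y" using side_iff mem_R[OF v] by blast
    with bridge_vertex_replacing_x'[OF v this] show ?thesis
      by (cases "v \<in> N x y1"; cases "v \<in> N x y2"; cases "v \<in> N y1 y2"; cases "bridge_vertex v"; simp)
  qed
  have "sum ?F R \<le> sum ?G R" by (rule sum_mono) (rule pointwise)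
  then show ?thesis
    using finite_R by (simp add: sum.distrib flip: sum_distrib_left)
qed

lemma link_count_T1:
  "card (R \<inter> N x x') + card (R \<inter> N x y1) + card (R \<inter> N x y2) + card (R \<inter> N y1 y2)
     + card (R \<inter> (Y - N x x'))
   \<le> 2 * card R + 2 * card (R \<inter> {v. bridge_vertex v}) + card (R \<inter> {v. clique_vertex v})"
proof -
  let ?F = "\<lambda>v. of_bool (v \<in> N x x') + of_bool (v \<in> N x y1) + of_bool (v \<in> N x y2)
    + of_bool (v \<in> N y1 y2) + of_bool (v \<in> Y - N x x') :: nat"
  let ?G = "\<lambda>v. 2 + 2 * of_bool (bridge_vertex v) + of_bool (clique_vertex v) :: nat"
  have pointwise: "?F v \<le> ?G v" if v: "v \<in> R" for v
  proof (cases "v \<in> X")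
    case True
    then have "v \<notin> Y" using disjoint by blast
    with True bridge_vertex_replacing_y1[OF v True] bridge_vertex_replacing_y2[OF v True]
      clique_vertex_replacing_x'[OF v True]
    show ?thesis
      by (cases "v \<in> N x x'"; cases "v \<in> N x y1"; cases "v \<in> N x y2"; cases "v \<in> N y1 y2";
          cases "bridge_vertex v"; cases "clique_vertex v"; simp)
  next
    case False
    then have "v \<in> Y" using side_iff mem_R[OF v] by blast
    with bridge_vertex_replacing_x'[OF v this] show ?thesis
      by (cases "v \<in> N x x'"; cases "v \<in> N x y1"; cases "v \<in> N x y2"; cases "v \<in> N y1 y2";
          cases "bridge_vertex v"; simp)
  qed
  have "sum ?F R \<le> sum ?G R" by (rule sum_mono) (rule pointwise)
  then show ?thesis
    using finite_R by (simp only: sum.distrib) (simp add: set_diff_eq flip: sum_distrib_left)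
qed

lemma link_count_T3:
  "card (R \<inter> N x x') + card (R \<inter> N x y1) + card (R \<inter> N x y2) + card (R \<inter> N x' y1)
     + card (R \<inter> N x' y2) + card (R \<inter> N y1 y2) + card (R \<inter> X)
   \<le> 3 * card R + 2 * card (R \<inter> {v. bridge_vertex v}) + card (R \<inter> {v. clique_vertex v})
     + card (R \<inter> X \<inter> N x y1) + card (R \<inter> X \<inter> N x' y1)"
proof -
  let ?F = "\<lambda>v. of_bool (v \<in> N x x') + of_bool (v \<in> N x y1) + of_bool (v \<in> N x y2)
    + of_bool (v \<in> N x' y1) + of_bool (v \<in> N x' y2) + of_bool (v \<in> N y1 y2)
    + of_bool (v \<in> X) :: nat"
  let ?G = "\<lambda>v. 3 + 2 * of_bool (bridge_vertex v) + of_bool (clique_vertex v)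
    + of_bool (v \<in> X \<inter> N x y1) + of_bool (v \<in> X \<inter> N x' y1) :: nat"
  have pointwise: "?F v \<le> ?G v" if v: "v \<in> R" for v
  proof (cases "v \<in> X")
    case True
    with bridge_vertex_replacing_y1[OF v True] show ?thesis
      by (cases "v \<in> N x x'"; cases "v \<in> N x y2"; cases "v \<in> N x' y2"; cases "bridge_vertex v"; simp)
  next
    case False
    then have "v \<in> Y" using side_iff mem_R[OF v] by blast
    have "?F v = of_bool (v \<in> N x x') + of_bool (v \<in> N x y1) + of_bool (v \<in> N x y2)
      + of_bool (v \<in> N x' y1) + of_bool (v \<in> N x' y2) + of_bool (v \<in> N y1 y2)"
      using False by simp
    also have "\<dots> \<le> 3 + 2 * of_bool (bridge_vertex v) + of_bool (clique_vertex v)"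
      by (rule six_indicator_bound[OF bridge_vertex_replacing_x'[OF v \<open>v \<in> Y\<close>]
            bridge_vertex_replacing_x[OF v \<open>v \<in> Y\<close>] clique_vertex_replacing_y1[OF v \<open>v \<in> Y\<close>]
            clique_vertex_replacing_y2[OF v \<open>v \<in> Y\<close>]])
    also have "\<dots> \<le> ?G v" by simp
    finally show ?thesis .
  qed
  have "sum ?F R \<le> sum ?G R" by (rule sum_mono) (rule pointwise)
  then show ?thesis
    using finite_R by (simp add: sum.distrib Int_assoc Collect_conj_eq flip: sum_distrib_left)
qed

lemma card_R_nbh_pairs:
  "(1/2 - \<gamma>) * real (card V) - 2 \<le> real (card (R \<inter> N x x'))"
  "(1/2 - \<gamma>) * real (card V) - 2 \<le> real (card (R \<inter> N x y1))"
  "(1/2 - \<gamma>) * real (card V) - 2 \<le> real (card (R \<inter> N x y2))"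
  "(1/2 - \<gamma>) * real (card V) - 2 \<le> real (card (R \<inter> N x' y1))"
  "(1/2 - \<gamma>) * real (card V) - 2 \<le> real (card (R \<inter> N x' y2))"
  "(1/2 - \<gamma>) * real (card V) - 2 \<le> real (card (R \<inter> N y1 y2))"
  by (rule card_R_nbh; use distinct_quadruple in \<open>simp add: T_def\<close>)+

lemma card_R_Int_nbh_less:
  assumes "t \<in> T" "t \<in> N u w" "t \<in> X"
  shows "card (R \<inter> X \<inter> N u w) + 1 \<le> card (N u w \<inter> X)"
proof -
  have "finite (N u w \<inter> X)"
    using finite_subset[OF nbh_subset finite_V] by blast
  then have "card (insert t (R \<inter> X \<inter> N u w)) \<le> card (N u w \<inter> X)"
    using assms(2,3) by (intro card_mono) auto
  moreover have "t \<notin> R" using assms(1) unfolding R_def by simp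
  ultimately show ?thesis using finite_R by simp
qed

context
  assumes few_bridge_vertices: "real (card (R \<inter> {v. bridge_vertex v})) < \<gamma> * real (card V) / 4"
    and few_clique_vertices: "real (card (R \<inter> {v. clique_vertex v})) < \<gamma> * real (card V) / 4"
begin

lemma card_X_card_Y_balanced:
  "(1/2 - 15*\<gamma>/4) * real (card V) \<le> real (card X) \<and> real (card X) \<le> (1/2 + 15*\<gamma>/4) * real (card V)
   \<and> (1/2 - 15*\<gamma>/4) * real (card V) \<le> real (card Y) \<and> real (card Y) \<le> (1/2 + 15*\<gamma>/4) * real (card V)"
proof -
  note X_excess = link_count_X_excess[THEN of_nat_mono[where 'a = real],
      unfolded of_nat_add of_nat_mult of_nat_numeral]
  note Y_excess = link_count_Y_excess[THEN of_nat_mono[where 'a = real],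
      unfolded of_nat_add of_nat_mult of_nat_numeral]
  have "real (card V) = real (card R) + 4" "real (card X) = real (card (R \<inter> X)) + 2"
    "real (card Y) = real (card (R \<inter> Y)) + 2" "real (card R) = real (card (R \<inter> X)) + real (card (R \<inter> Y))"
    using card_V card_X card_Y card_R by simp_all
  then show ?thesis
    using X_excess Y_excess card_R_nbh_pairs[unfolded left_diff_distrib]
      few_bridge_vertices few_clique_vertices
    unfolding left_diff_distrib distrib_right by linarith
qed

lemma typical_T1: "real (card (N x x' \<inter> Y)) \<ge> real (card Y) - 26 * \<gamma> * real (card V)"
proof -
  note T1_count = link_count_T1[THEN of_nat_mono[where 'a = real],
      unfolded of_nat_add of_nat_mult of_nat_numeral]
  have "y1 \<in> N x x'" "y2 \<in> N x x'"
    using edges mem cover by (auto simp: mem_nbh_iff insert_commute)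
  then have "Y - N x x' \<subseteq> R \<inter> (Y - N x x')"
    using cover disjoint mem unfolding R_def T_def by auto
  then have "real (card (Y - N x x')) \<le> real (card (R \<inter> (Y - N x x')))"
    using finite_R by (intro of_nat_mono card_mono) auto
  moreover have "finite Y" using finite_V cover by auto
  then have "real (card Y) = real (card (N x x' \<inter> Y)) + real (card (Y - N x x'))"
    using card_Int_Diff[of Y "N x x'"] by (simp add: Int_commute)
  moreover have "real (card V) = real (card R) + 4" using card_V by simp
  ultimately show ?thesis
    using T1_count card_R_nbh_pairs[unfolded left_diff_distrib]
      few_bridge_vertices few_clique_vertices by linarith
qed

lemma typical_T2: "real (card (N x y1 \<inter> N x' y1 \<inter> X)) \<le> 26 * \<gamma> * real (card V)"
proof -
  have "N x y1 \<inter> N x' y1 \<inter> X \<subseteq> R \<inter> {v. bridge_vertex v}"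
  proof
    fix v assume v: "v \<in> N x y1 \<inter> N x' y1 \<inter> X"
    then have "v \<in> R"
      using nbh_subset[of V E x y1] not_mem_nbh[OF three_graph] mem disjoint
      unfolding R_def T_def by auto
    with v bridge_vertex_replacing_y2 show "v \<in> R \<inter> {v. bridge_vertex v}" by blast
  qed
  then have "card (N x y1 \<inter> N x' y1 \<inter> X) \<le> card (R \<inter> {v. bridge_vertex v})"
    using finite_R by (intro card_mono) auto
  then show ?thesis using few_bridge_vertices by linarith
qed

lemma typical_T3:
  "real (card X) - 26 * \<gamma> * real (card V) \<le> real (card (N x y1 \<inter> X)) + real (card (N x' y1 \<inter> X))"
proof -
  note T3_count = link_count_T3[THEN of_nat_mono[where 'a = real],
      unfolded of_nat_add of_nat_mult of_nat_numeral]
  have "x' \<in> N x y1" "x \<in> N x' y1"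
    using edges mem cover by (auto simp: mem_nbh_iff insert_commute)
  have "card (R \<inter> X \<inter> N x y1) + 1 \<le> card (N x y1 \<inter> X)"
    by (rule card_R_Int_nbh_less[of x']) (use \<open>x' \<in> N x y1\<close> mem in \<open>simp_all add: T_def\<close>)
  moreover have "card (R \<inter> X \<inter> N x' y1) + 1 \<le> card (N x' y1 \<inter> X)"
    by (rule card_R_Int_nbh_less[of x]) (use \<open>x \<in> N x' y1\<close> mem in \<open>simp_all add: T_def\<close>)
  ultimately have "real (card (R \<inter> X \<inter> N x y1)) + 1 \<le> real (card (N x y1 \<inter> X))"
    "real (card (R \<inter> X \<inter> N x' y1)) + 1 \<le> real (card (N x' y1 \<inter> X))"
    by (metis of_nat_1 of_nat_add of_nat_le_iff)+
  moreover have "real (card V) = real (card R) + 4" "real (card X) = real (card (R \<inter> X)) + 2"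
    using card_V card_X by simp_all
  ultimately show ?thesis
    using T3_count card_R_nbh_pairs[unfolded left_diff_distrib]
      few_bridge_vertices few_clique_vertices by linarith
qed

lemma typical_x_x'_y1: "typical V E (26 * \<gamma>) X Y x x' y1"
  using mem typical_T1 typical_T2 typical_T3 unfolding typical_def by simp

end

end

theorem lemma5p11:
  fixes V :: "'a set" and E :: "'a set set" and X Y :: "'a set" and \<gamma> :: real
    and x x' y1 y2 :: 'a
  assumes H: "three_graph V E"
    and gam: "\<gamma> > 0"
    and deg: "real (min_codeg V E) \<ge> (1/2 - \<gamma>) * real (card V)"
    and part: "X \<union> Y = V" "X \<inter> Y = {}"
    and mem: "x \<in> X" "x' \<in> X" "y1 \<in> Y" "y2 \<in> Y"
    and edges: "{x, y1, y2} \<in> E" "{x, x', y1} \<in> E" "{x, x', y2} \<in> E"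
  shows "real (card {Z. Z \<subseteq> V \<and> {x, x', y1, y2} \<subseteq> Z \<and> spans_bridge1 V E X Y Z})
           \<ge> \<gamma> * real (card V) / 4
       \<or> real (card {K. K \<subseteq> V \<and> is_K4 E K \<and> card (K \<inter> X) = 2 \<and> card (K \<inter> Y) = 2
                     \<and> card (K \<inter> {x, x', y1, y2}) = 3}) \<ge> \<gamma> * real (card V) / 4
       \<or> ((1/2 - 15*\<gamma>/4) * real (card V) \<le> real (card X)
          \<and> real (card X) \<le> (1/2 + 15*\<gamma>/4) * real (card V)
          \<and> (1/2 - 15*\<gamma>/4) * real (card V) \<le> real (card Y)
          \<and> real (card Y) \<le> (1/2 + 15*\<gamma>/4) * real (card V)
          \<and> typical V E (26*\<gamma>) X Y x x' y1)"
proof -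
  interpret bridge_quadruple V E X Y \<gamma> x x' y1 y2
    using H deg part mem edges by unfold_locales
  let ?Z = "{Z. Z \<subseteq> V \<and> T \<subseteq> Z \<and> spans_bridge1 V E X Y Z}"
  have "real (card (R \<inter> {v. bridge_vertex v})) \<le> real (card ?Z)"
    "real (card (R \<inter> {v. clique_vertex v})) \<le> real (card crossing_K4s)"
    using card_bridge_vertices_le card_clique_vertices_le by simp_all
  then consider "real (card ?Z) \<ge> \<gamma> * real (card V) / 4"
    | "real (card crossing_K4s) \<ge> \<gamma> * real (card V) / 4"
    | "real (card (R \<inter> {v. bridge_vertex v})) < \<gamma> * real (card V) / 4"
      "real (card (R \<inter> {v. clique_vertex v})) < \<gamma> * real (card V) / 4"
    by linarith
  then show ?thesis
    using card_X_card_Y_balanced typical_x_x'_y1 unfolding crossing_K4s_def T_def by cases auto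
qed

end
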